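(* Fix an agent $i$ with $\theta_i^*\in\Theta_i$ and $\sigma^2>0$. If $p_i(t)\sim\mathcal N(0,\sigma^2)$ and $x_i(t)=x_i^*(p_i(t))$, then there exists $\delta>0$ such that \[ \mathbb E\big[\xi_i(t)\xi_i(t)^\top\delta_i(t)\big]\succeq\delta\,\mathbb I_d. \]
   Context: $\mathcal X_i\subset\mathbb R$ is a compact interval with nonempty interior; $\Phi(x)=(x,x^2,\dots,x^d)^\top$; $\Theta_i=\{\theta\in\mathbb R^d: m_i\le\theta^\top\nabla^2\Phi(x)\le M_i\ \forall x\in\mathcal X_i\}$ for constants $0<m_i\le M_i$. The best response to incentive $p$ is $x_i^*(p)=\arg\min_{x\in\mathcal X_i}(\theta_i^{*\top}\Phi(x)+px)$. $\xi_i(t)=\nabla\Phi(x_i(t))$ and $\delta_i(t)=\mathbf 1\{x_i(t)\in\operatorname{int}\mathcal X_i\}$. *)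

theory Defs
  imports "HOL-Probability.Probability"
begin

text \<open>Vectors in R^d are represented as functions nat => real, using indices 0..d-1.
  Component k (0-based) of Phi(x) is x^(k+1).\<close>

definition Phi :: "nat \<Rightarrow> real \<Rightarrow> (nat \<Rightarrow> real)" where
  "Phi d x = (\<lambda>k. if k < d then x ^ (k + 1) else 0)"

definition gradPhi :: "nat \<Rightarrow> real \<Rightarrow> (nat \<Rightarrow> real)" where
  "gradPhi d x = (\<lambda>k. if k < d then real (k + 1) * x ^ k else 0)"

definition hessPhi :: "nat \<Rightarrow> real \<Rightarrow> (nat \<Rightarrow> real)" where
  "hessPhi d x = (\<lambda>k. if k < d then real ((k + 1) * k) * x ^ (k - 1) else 0)"

definition dotd :: "nat \<Rightarrow> (nat \<Rightarrow> real) \<Rightarrow> (nat \<Rightarrow> real) \<Rightarrow> real" where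
  "dotd d u v = (\<Sum>k<d. u k * v k)"

definition Theta :: "nat \<Rightarrow> real set \<Rightarrow> real \<Rightarrow> real \<Rightarrow> (nat \<Rightarrow> real) set" where
  "Theta d X m M = {\<theta>. \<forall>x\<in>X. m \<le> dotd d \<theta> (hessPhi d x) \<and> dotd d \<theta> (hessPhi d x) \<le> M}"

definition best_response :: "nat \<Rightarrow> real set \<Rightarrow> (nat \<Rightarrow> real) \<Rightarrow> real \<Rightarrow> real" where
  "best_response d X \<theta> p =
     (THE x. x \<in> X \<and> (\<forall>y\<in>X. dotd d \<theta> (Phi d x) + p * x \<le> dotd d \<theta> (Phi d y) + p * y))"

definition loewner_ge_scaled_id :: "nat \<Rightarrow> (nat \<Rightarrow> nat \<Rightarrow> real) \<Rightarrow> real \<Rightarrow> bool" where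
  "loewner_ge_scaled_id d A c =
     (\<forall>v :: nat \<Rightarrow> real. 0 \<le> (\<Sum>j<d. \<Sum>k<d. v j * (A j k - (if j = k then c else 0)) * v k))"

end

(*
  Write f x = dotd d theta (Phi d x). As f'' >= m > 0 on [a, b], the best response x*(p) is the
  unique minimiser of f x + p x on [a, b]; it is antitone in p, hence measurable, and for p in the
  nondegenerate interval (-f'(b), -f'(a)) it is interior with f'(x*(p)) = -p. For v <> 0 the
  quadratic form of the matrix is E[(v . gradPhi(x*(p)))^2 1{x*(p) interior}]; since v . gradPhi
  is a nonzero polynomial, its finitely many roots are hit by x*(p) for only finitely many p of
  that interval, so the positive Gaussian density makes the expectation positive. Compactness of
  the unit sphere turns this pointwise positivity into a uniform bound delta.
*)
theory Submission
  imports Defs "HOL-Computational_Algebra.Polynomial"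
begin

definition quad_form :: "nat \<Rightarrow> (nat \<Rightarrow> nat \<Rightarrow> real) \<Rightarrow> (nat \<Rightarrow> real) \<Rightarrow> real" where
  "quad_form d A v = (\<Sum>j<d. \<Sum>k<d. v j * A j k * v k)"

lemma loewner_ge_scaled_id_iff:
  "loewner_ge_scaled_id d A \<delta> \<longleftrightarrow> (\<forall>v. \<delta> * (\<Sum>j<d. (v j)\<^sup>2) \<le> quad_form d A v)"
proof -
  have diag: "v j * (if j = k then \<delta> else 0) * v k = (if j = k then \<delta> * (v j)\<^sup>2 else 0)"
    for v :: "nat \<Rightarrow> real" and j k
    by (simp add: power2_eq_square)
  have "(\<Sum>j<d. \<Sum>k<d. v j * (A j k - (if j = k then \<delta> else 0)) * v k)
      = quad_form d A v - \<delta> * (\<Sum>j<d. (v j)\<^sup>2)" for v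
    by (simp add: quad_form_def right_diff_distrib left_diff_distrib sum_subtractf diag sum_distrib_left)
  then show ?thesis
    by (simp add: loewner_ge_scaled_id_def)
qed

lemma quad_form_scale: "quad_form d A (\<lambda>j. c * v j) = c\<^sup>2 * quad_form d A v"
  by (simp add: quad_form_def sum_distrib_left power2_eq_square mult_ac)

lemma quad_form_restrict: "quad_form d A (restrict v {..<d}) = quad_form d A v"
  by (simp add: quad_form_def)

lemma compactin_sphere_PiE:
  fixes d :: nat
  shows "compactin (product_topology (\<lambda>_. euclideanreal) {..<d}) {v \<in> {..<d} \<rightarrow>\<^sub>E UNIV. (\<Sum>j<d. (v j)\<^sup>2) = 1}"
    (is "compactin ?T ?S")
proof (rule closed_compactin)
  show "compactin ?T ({..<d} \<rightarrow>\<^sub>E {-1..1})"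
    by (subst compactin_PiE) auto
  have "continuous_map ?T euclideanreal (\<lambda>v. \<Sum>j<d. (v j)\<^sup>2)"
    unfolding power2_eq_square
    by (intro continuous_map_sum continuous_map_real_mult continuous_map_product_projection) auto
  then show "closedin ?T ?S"
    using closedin_continuous_map_preimage[of ?T euclideanreal _ "{1}"] by simp
  show "?S \<subseteq> {..<d} \<rightarrow>\<^sub>E {-1..1}"
  proof
    fix v assume v: "v \<in> ?S"
    have "\<bar>v j\<bar> \<le> 1" if "j < d" for j
    proof -
      have "(v j)\<^sup>2 \<le> (\<Sum>j<d. (v j)\<^sup>2)"
        using that by (intro member_le_sum) auto
      then show ?thesis
        using v by (simp add: abs_square_le_1)
    qed
    then show "v \<in> {..<d} \<rightarrow>\<^sub>E {-1..1}"
      using v by (auto simp: abs_le_iff)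
  qed
qed

lemma quad_form_ge_of_sphere:
  assumes sphere: "\<And>u. u \<in> {..<d} \<rightarrow>\<^sub>E UNIV \<Longrightarrow> (\<Sum>j<d. (u j)\<^sup>2) = 1 \<Longrightarrow> \<mu> \<le> quad_form d A u"
  shows "\<mu> * (\<Sum>j<d. (v j)\<^sup>2) \<le> quad_form d A v"
proof (cases "\<forall>j<d. v j = 0")
  case True
  then show ?thesis
    by (simp add: quad_form_def)
next
  case False
  define s where "s = (\<Sum>j<d. (v j)\<^sup>2)"
  obtain j where "j < d" "v j \<noteq> 0"
    using False by auto
  then have "0 < s"
    unfolding s_def by (intro sum_pos2[of _ j]) auto
  define u where "u = restrict (\<lambda>j. v j / sqrt s) {..<d}"
  have "(\<Sum>j<d. (u j)\<^sup>2) = (\<Sum>j<d. (v j)\<^sup>2) / s"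
    using \<open>0 < s\<close> by (simp add: u_def power_divide sum_divide_distrib)
  then have "\<mu> \<le> quad_form d A u"
    using \<open>0 < s\<close> by (intro sphere) (simp_all add: u_def s_def)
  also have "quad_form d A u = quad_form d A v / s"
    using quad_form_scale[of d A "1 / sqrt s" v] \<open>0 < s\<close>
    by (simp add: u_def quad_form_restrict[of d A "\<lambda>j. v j / sqrt s", simplified] power_divide)
  finally show ?thesis
    using \<open>0 < s\<close> by (simp add: s_def pos_le_divide_eq)
qed

lemma quad_form_pos_imp_coercive:
  assumes pos: "\<And>v. \<exists>j<d. v j \<noteq> 0 \<Longrightarrow> 0 < quad_form d A v"
  shows "\<exists>\<delta>>0. \<forall>v. \<delta> * (\<Sum>j<d. (v j)\<^sup>2) \<le> quad_form d A v"
proof (cases "d = 0")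
  case True
  then show ?thesis
    by (intro exI[of _ 1]) (simp add: quad_form_def)
next
  case False
  define S :: "(nat \<Rightarrow> real) set" where "S = {v \<in> {..<d} \<rightarrow>\<^sub>E UNIV. (\<Sum>j<d. (v j)\<^sup>2) = 1}"
  have "continuous_map (product_topology (\<lambda>_. euclideanreal) {..<d}) euclideanreal (quad_form d A)"
    unfolding quad_form_def
    by (intro continuous_map_sum continuous_map_real_mult continuous_map_product_projection) auto
  then have "compactin euclideanreal (quad_form d A ` S)"
    unfolding S_def by (rule image_compactin[OF compactin_sphere_PiE])
  then have "compact (quad_form d A ` S)"
    by simp
  moreover have "restrict (\<lambda>j. if j = 0 then 1 else 0) {..<d} \<in> S"
  proof -
    have "(\<Sum>j<d. (restrict (\<lambda>j. if j = 0 then 1 else 0) {..<d} j)\<^sup>2)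
        = (\<Sum>j<d. if j = 0 then 1 else 0 :: real)"
      by (intro sum.cong) auto
    then show ?thesis
      using False by (simp add: S_def)
  qed
  ultimately obtain w where "w \<in> S" and w_min: "\<And>u. u \<in> S \<Longrightarrow> quad_form d A w \<le> quad_form d A u"
    using compact_attains_inf[of "quad_form d A ` S"] by blast
  have "\<exists>j<d. w j \<noteq> 0"
  proof (rule ccontr)
    assume "\<not> (\<exists>j<d. w j \<noteq> 0)"
    then have "(\<Sum>j<d. (w j)\<^sup>2) = 0"
      by simp
    then show False
      using \<open>w \<in> S\<close> by (simp add: S_def)
  qed
  then have "0 < quad_form d A w"
    by (rule pos)
  moreover have "quad_form d A w * (\<Sum>j<d. (v j)\<^sup>2) \<le> quad_form d A v" for v
    by (intro quad_form_ge_of_sphere w_min) (simp add: S_def)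
  ultimately show ?thesis
    by blast
qed

locale strictly_convex_interval =
  fixes f f' :: "real \<Rightarrow> real" and a b :: real
  assumes a_le_b: "a \<le> b"
    and deriv: "\<And>x. x \<in> {a..b} \<Longrightarrow> (f has_real_derivative f' x) (at x)"
    and continuous_deriv: "continuous_on {a..b} f'"
    and strict_mono_deriv: "strict_mono_on {a..b} f'"
begin

lemma secant_bounds:
  assumes "a \<le> x" "x < y" "y \<le> b"
  shows "f' x * (y - x) < f y - f x" and "f y - f x < f' y * (y - x)"
proof -
  obtain z where z: "x < z" "z < y" "f y - f x = (y - x) * f' z"
    using MVT2[OF \<open>x < y\<close>, of f f'] deriv assms by auto
  have "f' x < f' z" "f' z < f' y"
    using strict_mono_onD[OF strict_mono_deriv] z assms by auto
  with z \<open>x < y\<close> show "f' x * (y - x) < f y - f x" and "f y - f x < f' y * (y - x)"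
    by (simp_all add: mult.commute)
qed

lemma tilted_lt_max:
  assumes "a \<le> x" "x < c" "c < y" "y \<le> b"
  shows "f c + p * c < max (f x + p * x) (f y + p * y)"
proof (cases "0 \<le> f' c + p")
  case True
  have "f' c * (y - c) < f y - f c"
    using secant_bounds(1)[of c y] assms by simp
  moreover have "0 \<le> (f' c + p) * (y - c)"
    using True assms by simp
  ultimately show ?thesis by (simp add: algebra_simps)
next
  case False
  have "f c - f x < f' c * (c - x)"
    using secant_bounds(2)[of x c] assms by simp
  moreover have "(f' c + p) * (c - x) < 0"
    using False assms by (simp add: mult_neg_pos)
  ultimately show ?thesis by (simp add: algebra_simps)
qed

definition tilted_argmin :: "real \<Rightarrow> real" where
  "tilted_argmin p = (THE x. x \<in> {a..b} \<and> (\<forall>y\<in>{a..b}. f x + p * x \<le> f y + p * y))"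

lemma tilted_min_unique: "\<exists>!x. x \<in> {a..b} \<and> (\<forall>y\<in>{a..b}. f x + p * x \<le> f y + p * y)"
proof (rule ex_ex1I)
  have "continuous_on {a..b} f"
    using deriv by (meson DERIV_isCont continuous_at_imp_continuous_on)
  then have "continuous_on {a..b} (\<lambda>x. f x + p * x)"
    by (intro continuous_intros)
  then show "\<exists>x. x \<in> {a..b} \<and> (\<forall>y\<in>{a..b}. f x + p * x \<le> f y + p * y)"
    using continuous_attains_inf[of "{a..b}" "\<lambda>x. f x + p * x"] a_le_b by auto
next
  fix x x'
  assume x: "x \<in> {a..b} \<and> (\<forall>y\<in>{a..b}. f x + p * x \<le> f y + p * y)"
    and x': "x' \<in> {a..b} \<and> (\<forall>y\<in>{a..b}. f x' + p * x' \<le> f y + p * y)"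
  have False if "u < v" and u: "u \<in> {a..b}" "\<forall>y\<in>{a..b}. f u + p * u \<le> f y + p * y"
    and v: "v \<in> {a..b}" "\<forall>y\<in>{a..b}. f v + p * v \<le> f y + p * y" for u v
  proof -
    define c where "c = (u + v) / 2"
    have c: "u < c" "c < v" "c \<in> {a..b}"
      using \<open>u < v\<close> u v unfolding c_def by auto
    have "f c + p * c < max (f u + p * u) (f v + p * v)"
      using tilted_lt_max[of u c v p] c u v by auto
    moreover have "f u + p * u \<le> f c + p * c" "f v + p * v \<le> f c + p * c"
      using c u v by auto
    ultimately show False
      by linarith
  qed
  then show "x = x'"
    using x x' by (metis linorder_neqE_linordered_idom)
qed

lemma
  shows tilted_argmin_in: "tilted_argmin p \<in> {a..b}"
    and tilted_argmin_le: "y \<in> {a..b} \<Longrightarrow> f (tilted_argmin p) + p * tilted_argmin p \<le> f y + p * y"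
  using theI'[OF tilted_min_unique[of p]] unfolding tilted_argmin_def by auto

lemma tilted_argmin_eqI:
  assumes "x \<in> {a..b}" "\<And>y. y \<in> {a..b} \<Longrightarrow> f x + p * x \<le> f y + p * y"
  shows "tilted_argmin p = x"
  unfolding tilted_argmin_def using assms tilted_min_unique[of p] by (intro the1_equality) auto

lemma tilted_argmin_antimono:
  assumes "p \<le> q"
  shows "tilted_argmin q \<le> tilted_argmin p"
proof -
  let ?x = "tilted_argmin p" and ?y = "tilted_argmin q"
  have "f ?x + p * ?x \<le> f ?y + p * ?y" "f ?y + q * ?y \<le> f ?x + q * ?x"
    using tilted_argmin_in tilted_argmin_le by blast+
  then have "(q - p) * (?y - ?x) \<le> 0"
    by (simp add: algebra_simps)
  then show ?thesis
    using assms by (cases "p = q") (auto simp: mult_le_0_iff)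
qed

lemma borel_measurable_tilted_argmin: "tilted_argmin \<in> borel_measurable borel"
proof -
  have "mono (\<lambda>p. - tilted_argmin p)"
    by (intro monoI) (simp add: tilted_argmin_antimono)
  then have "(\<lambda>p. - (- tilted_argmin p)) \<in> borel_measurable borel"
    by (intro borel_measurable_uminus borel_measurable_mono)
  then show ?thesis
    by simp
qed

lemma tilted_argmin_interior:
  assumes "- f' b < p" "p < - f' a"
  shows "tilted_argmin p \<in> {a<..<b}" and "f' (tilted_argmin p) = - p"
proof -
  obtain x where x: "a \<le> x" "x \<le> b" "f' x = - p"
    using IVT'[of f' a "- p" b] assms a_le_b continuous_deriv by auto
  have "f x + p * x \<le> f y + p * y" if "y \<in> {a..b}" for y
  proof (cases y x rule: linorder_cases)
    case less
    then show ?thesis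
      using secant_bounds(2)[of y x] x that by (simp add: algebra_simps)
  next
    case greater
    then show ?thesis
      using secant_bounds(1)[of x y] x that by (simp add: algebra_simps)
  qed simp
  then have "tilted_argmin p = x"
    using x by (intro tilted_argmin_eqI) auto
  moreover have "x \<noteq> a" "x \<noteq> b"
    using x assms by auto
  ultimately show "tilted_argmin p \<in> {a<..<b}" and "f' (tilted_argmin p) = - p"
    using x by auto
qed

text \<open>On this interval \<open>f' (tilted_argmin p) = - p\<close>, so \<open>tilted_argmin\<close> is injective there and
  only finitely many incentives are sent into \<open>Z\<close>.\<close>
lemma AE_tilted_argmin_interior_notin:
  assumes "finite Z"
  shows "AE p in lborel. p \<in> {- f' b<..<- f' a} \<longrightarrow> tilted_argmin p \<in> {a<..<b} - Z"
proof -
  have "AE p in lborel. p \<notin> (\<lambda>x. - f' x) ` Z"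
    using assms by (intro AE_not_in finite_imp_null_set_lborel) simp
  then show ?thesis
  proof eventually_elim
    case (elim p)
    then show ?case
      using tilted_argmin_interior[of p] by force
  qed
qed

end

lemma DERIV_dotd_Phi:
  "((\<lambda>x. dotd d \<theta> (Phi d x)) has_real_derivative dotd d \<theta> (gradPhi d x)) (at x)"
proof -
  have "(\<lambda>x. dotd d \<theta> (Phi d x)) = (\<lambda>x. \<Sum>k<d. \<theta> k * x ^ Suc k)"
    "dotd d \<theta> (gradPhi d x) = (\<Sum>k<d. \<theta> k * (real (Suc k) * x ^ k))"
    by (simp_all add: dotd_def Phi_def gradPhi_def)
  then show ?thesis
    by (simp only:) (intro DERIV_sum DERIV_cmult DERIV_pow[THEN DERIV_cong], simp)
qed

lemma DERIV_dotd_gradPhi: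
  "((\<lambda>x. dotd d \<theta> (gradPhi d x)) has_real_derivative dotd d \<theta> (hessPhi d x)) (at x)"
proof -
  have "(\<lambda>x. dotd d \<theta> (gradPhi d x)) = (\<lambda>x. \<Sum>k<d. \<theta> k * real (Suc k) * x ^ k)"
    "dotd d \<theta> (hessPhi d x) = (\<Sum>k<d. \<theta> k * real (Suc k) * (real k * x ^ (k - 1)))"
    by (simp_all add: dotd_def gradPhi_def hessPhi_def algebra_simps)
  then show ?thesis
    by (simp only:) (intro DERIV_sum DERIV_cmult DERIV_pow[THEN DERIV_cong], simp)
qed

lemma strictly_convex_interval_dotd_Phi:
  assumes "a \<le> b" and hess_pos: "\<And>x. x \<in> {a..b} \<Longrightarrow> 0 < dotd d \<theta> (hessPhi d x)"
  shows "strictly_convex_interval (\<lambda>x. dotd d \<theta> (Phi d x)) (\<lambda>x. dotd d \<theta> (gradPhi d x)) a b"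
proof
  show "continuous_on {a..b} (\<lambda>x. dotd d \<theta> (gradPhi d x))"
    using DERIV_isCont[OF DERIV_dotd_gradPhi] by (blast intro: continuous_at_imp_continuous_on)
  show "strict_mono_on {a..b} (\<lambda>x. dotd d \<theta> (gradPhi d x))"
  proof (rule strict_mono_onI)
    fix x y :: real
    assume "x \<in> {a..b}" "y \<in> {a..b}" "x < y"
    then show "dotd d \<theta> (gradPhi d x) < dotd d \<theta> (gradPhi d y)"
      using hess_pos by (intro DERIV_pos_imp_increasing[OF \<open>x < y\<close>]) (auto intro: DERIV_dotd_gradPhi)
  qed
qed (use assms DERIV_dotd_Phi in auto)

lemma best_response_eq_tilted_argmin:
  assumes "strictly_convex_interval (\<lambda>x. dotd d \<theta> (Phi d x)) f' a b"
  shows "best_response d {a..b} \<theta> = strictly_convex_interval.tilted_argmin (\<lambda>x. dotd d \<theta> (Phi d x)) a b"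
  using strictly_convex_interval.tilted_argmin_def[OF assms] by (simp add: best_response_def fun_eq_iff)

lemma abs_gradPhi_le:
  assumes "\<bar>x\<bar> \<le> r"
  shows "\<bar>gradPhi d x j\<bar> \<le> real (Suc j) * r ^ j"
proof -
  have "0 \<le> r"
    using assms by linarith
  then show ?thesis
    using power_mono[OF assms abs_ge_zero, of j] by (simp add: gradPhi_def abs_mult power_abs mult_left_mono)
qed

lemma finite_roots_dotd_gradPhi:
  assumes "\<exists>j<d. v j \<noteq> 0"
  shows "finite {x. dotd d v (gradPhi d x) = 0}"
proof -
  define P where "P = (\<Sum>j<d. monom (v j * real (Suc j)) j)"
  have "poly P x = dotd d v (gradPhi d x)" for x
    by (simp add: P_def poly_sum poly_monom dotd_def gradPhi_def mult_ac)
  moreover have "P \<noteq> 0"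
  proof -
    obtain j where "j < d" "v j \<noteq> 0"
      using assms by blast
    moreover have "coeff P j = (if j < d then v j * real (Suc j) else 0)"
      by (simp add: P_def coeff_sum)
    ultimately show ?thesis
      by auto
  qed
  ultimately show ?thesis
    using poly_roots_finite[of P] by simp
qed

lemma (in prob_space) quad_form_expectation:
  fixes Z :: "'a \<Rightarrow> nat \<Rightarrow> real" and w :: "'a \<Rightarrow> real"
  assumes int: "\<And>j k. integrable M (\<lambda>\<omega>. Z \<omega> j * Z \<omega> k * w \<omega>)"
  shows "integrable M (\<lambda>\<omega>. (\<Sum>j<d. v j * Z \<omega> j)\<^sup>2 * w \<omega>)"
    and "quad_form d (\<lambda>j k. expectation (\<lambda>\<omega>. Z \<omega> j * Z \<omega> k * w \<omega>)) v
      = expectation (\<lambda>\<omega>. (\<Sum>j<d. v j * Z \<omega> j)\<^sup>2 * w \<omega>)"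
proof -
  have expand: "(\<lambda>\<omega>. (\<Sum>j<d. v j * Z \<omega> j)\<^sup>2 * w \<omega>)
      = (\<lambda>\<omega>. \<Sum>j<d. \<Sum>k<d. v j * (Z \<omega> j * Z \<omega> k * w \<omega>) * v k)"
    unfolding power2_eq_square sum_product by (simp add: sum_distrib_left sum_distrib_right mult_ac)
  show "integrable M (\<lambda>\<omega>. (\<Sum>j<d. v j * Z \<omega> j)\<^sup>2 * w \<omega>)"
    unfolding expand using int by simp
  show "quad_form d (\<lambda>j k. expectation (\<lambda>\<omega>. Z \<omega> j * Z \<omega> k * w \<omega>)) v
      = expectation (\<lambda>\<omega>. (\<Sum>j<d. v j * Z \<omega> j)\<^sup>2 * w \<omega>)"
    unfolding expand quad_form_def using int by (simp add: integral_sum)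
qed

lemma (in prob_space) expectation_pos_of_positive_density:
  fixes X :: "'a \<Rightarrow> real" and f :: "real \<Rightarrow> ennreal" and g :: "real \<Rightarrow> real"
  assumes X: "distributed M lborel X f" and f_pos: "\<And>y. 0 < f y"
    and g[measurable]: "g \<in> borel_measurable borel" and g_nonneg: "\<And>y. 0 \<le> g y"
    and int: "integrable M (\<lambda>\<omega>. g (X \<omega>))"
    and "c < e" and nonzero: "AE y in lborel. y \<in> {c<..<e} \<longrightarrow> g y \<noteq> 0"
  shows "0 < expectation (\<lambda>\<omega>. g (X \<omega>))"
proof (rule ccontr)
  have distr_X: "distr M lborel X = density lborel f" and f_meas: "f \<in> borel_measurable lborel"
    and [measurable]: "X \<in> borel_measurable M"
    using X by (auto simp: distributed_def)
  assume "\<not> 0 < expectation (\<lambda>\<omega>. g (X \<omega>))"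
  moreover have "0 \<le> expectation (\<lambda>\<omega>. g (X \<omega>))"
    by (simp add: g_nonneg)
  ultimately have "expectation (\<lambda>\<omega>. g (X \<omega>)) = 0"
    by simp
  then have "AE \<omega> in M. g (X \<omega>) = 0"
    using integral_nonneg_eq_0_iff_AE[OF int] g_nonneg by simp
  then have "AE y in distr M lborel X. g y = 0"
    by (subst AE_distr_iff) auto
  then have "AE y in lborel. 0 < f y \<longrightarrow> g y = 0"
    unfolding distr_X by (rule AE_density[OF f_meas, THEN iffD1])
  then have "AE y in lborel. g y = 0"
    using f_pos by simp
  then have "AE y in lborel. y \<notin> {c<..<e}"
    using nonzero by eventually_elim auto
  then have "emeasure lborel {c<..<e} = 0"
    by (subst (asm) AE_iff_measurable[where N = "{c<..<e}"]) auto
  then show False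
    using \<open>c < e\<close> by simp
qed

lemma borel_measurable_gradPhi[measurable]: "(\<lambda>x. gradPhi d x j) \<in> borel_measurable borel"
  unfolding gradPhi_def by measurable

lemma (in prob_space) integrable_gradPhi_product:
  assumes [measurable]: "X \<in> borel_measurable M" "S \<in> sets borel" and bounded: "\<And>\<omega>. \<bar>X \<omega>\<bar> \<le> r"
  shows "integrable M (\<lambda>\<omega>. gradPhi d (X \<omega>) j * gradPhi d (X \<omega>) k * indicator S (X \<omega>))"
proof (rule integrable_const_bound[where B = "real (Suc j) * r ^ j * (real (Suc k) * r ^ k)"])
  have "0 \<le> r"
    using order_trans[OF abs_ge_zero bounded] by blast
  have "\<bar>gradPhi d (X \<omega>) j * gradPhi d (X \<omega>) k * indicator S (X \<omega>)\<bar>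
      \<le> \<bar>gradPhi d (X \<omega>) j\<bar> * \<bar>gradPhi d (X \<omega>) k\<bar>" for \<omega>
    by (simp add: abs_mult indicator_def)
  also have "\<dots> \<omega> \<le> real (Suc j) * r ^ j * (real (Suc k) * r ^ k)" for \<omega>
    using \<open>0 \<le> r\<close> by (intro mult_mono abs_gradPhi_le bounded) auto
  finally show "AE \<omega> in M. norm (gradPhi d (X \<omega>) j * gradPhi d (X \<omega>) k * indicator S (X \<omega>))
      \<le> real (Suc j) * r ^ j * (real (Suc k) * r ^ k)"
    by simp
qed measurable

definition expected_gram ::
    "nat \<Rightarrow> real set \<Rightarrow> (nat \<Rightarrow> real) \<Rightarrow> 'w measure \<Rightarrow> ('w \<Rightarrow> real) \<Rightarrow> nat \<Rightarrow> nat \<Rightarrow> real" where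
  "expected_gram d X \<theta> M p j k = prob_space.expectation M (\<lambda>\<omega>.
     let x = best_response d X \<theta> (p \<omega>) in gradPhi d x j * gradPhi d x k * indicator (interior X) x)"

lemma quad_form_expected_gram_pos:
  fixes p :: "'w \<Rightarrow> real" and g :: "real \<Rightarrow> ennreal"
  assumes "a < b" and hess_pos: "\<And>x. x \<in> {a..b} \<Longrightarrow> 0 < dotd d \<theta> (hessPhi d x)"
    and "prob_space M" and p: "distributed M lborel p g" and g_pos: "\<And>y. 0 < g y"
    and v: "\<exists>j<d. v j \<noteq> 0"
  shows "0 < quad_form d (expected_gram d {a..b} \<theta> M p) v"
proof -
  interpret prob_space M by fact
  interpret C: strictly_convex_interval "\<lambda>x. dotd d \<theta> (Phi d x)" "\<lambda>x. dotd d \<theta> (gradPhi d x)" a b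
    using assms by (intro strictly_convex_interval_dotd_Phi) auto
  define br where "br = best_response d {a..b} \<theta>"
  have br_eq: "br = C.tilted_argmin"
    unfolding br_def by (rule best_response_eq_tilted_argmin[OF C.strictly_convex_interval_axioms])
  have [measurable]: "br \<in> borel_measurable borel" "p \<in> borel_measurable M"
    using br_eq C.borel_measurable_tilted_argmin p by (auto simp: distributed_def)
  define q where "q y = (dotd d v (gradPhi d (br y)))\<^sup>2 * indicator {a<..<b} (br y)" for y
  have "\<bar>br y\<bar> \<le> \<bar>a\<bar> + \<bar>b\<bar>" for y
    using C.tilted_argmin_in[of y] br_eq by auto
  then have "integrable M (\<lambda>\<omega>.
      gradPhi d (br (p \<omega>)) j * gradPhi d (br (p \<omega>)) k * indicator {a<..<b} (br (p \<omega>)))" for j k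
    by (intro integrable_gradPhi_product) auto
  from quad_form_expectation[where Z = "\<lambda>\<omega>. gradPhi d (br (p \<omega>))"
      and w = "\<lambda>\<omega>. indicator {a<..<b} (br (p \<omega>))" and d = d and v = v, OF this]
  have q_int: "integrable M (\<lambda>\<omega>. q (p \<omega>))"
    and "quad_form d (expected_gram d {a..b} \<theta> M p) v = expectation (\<lambda>\<omega>. q (p \<omega>))"
    by (simp_all add: q_def dotd_def br_def expected_gram_def[abs_def] Let_def)
  moreover have "0 < expectation (\<lambda>\<omega>. q (p \<omega>))"
  proof (rule expectation_pos_of_positive_density[OF p g_pos _ _ q_int])
    show "q \<in> borel_measurable borel"
      unfolding q_def dotd_def by measurable
    show "0 \<le> q y" for y
      by (simp add: q_def)
    show "- dotd d \<theta> (gradPhi d b) < - dotd d \<theta> (gradPhi d a)"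
      using \<open>a < b\<close> strict_mono_onD[OF C.strict_mono_deriv] by simp
    show "AE y in lborel. y \<in> {- dotd d \<theta> (gradPhi d b)<..<- dotd d \<theta> (gradPhi d a)} \<longrightarrow> q y \<noteq> 0"
      using C.AE_tilted_argmin_interior_notin[OF finite_roots_dotd_gradPhi[OF v]]
      by eventually_elim (auto simp: q_def br_eq)
  qed
  ultimately show ?thesis
    by simp
qed

theorem lemma2:
  fixes d :: nat and a b m M \<sigma>2 :: real and \<theta> :: "nat \<Rightarrow> real"
    and M\<^sub>\<Omega> :: "'w measure" and p :: "'w \<Rightarrow> real"
  assumes "a < b"
    and "0 < m" and "m \<le> M"
    and "\<theta> \<in> Theta d {a..b} m M"
    and "0 < \<sigma>2"
    and "prob_space M\<^sub>\<Omega>"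
    and "distributed M\<^sub>\<Omega> lborel p (normal_density 0 (sqrt \<sigma>2))"
  shows "\<exists>\<delta>>0. loewner_ge_scaled_id d
           (\<lambda>j k. prob_space.expectation M\<^sub>\<Omega>
              (\<lambda>\<omega>. let x = best_response d {a..b} \<theta> (p \<omega>) in
                   gradPhi d x j * gradPhi d x k * indicator (interior {a..b}) x))
           \<delta>"
proof -
  have hess_pos: "0 < dotd d \<theta> (hessPhi d x)" if "x \<in> {a..b}" for x
    using assms(2,4) that by (force simp: Theta_def)
  have "0 < quad_form d (expected_gram d {a..b} \<theta> M\<^sub>\<Omega> p) v" if "\<exists>j<d. v j \<noteq> 0" for v
    using quad_form_expected_gram_pos[OF assms(1) hess_pos assms(6,7) _ that] normal_density_pos assms(5)
    by simp
  then obtain \<delta> where "0 < \<delta>" "\<forall>v. \<delta> * (\<Sum>j<d. (v j)\<^sup>2) \<le> quad_form d (expected_gram d {a..b} \<theta> M\<^sub>\<Omega> p) v"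
    using quad_form_pos_imp_coercive by blast
  then show ?thesis
    by (auto simp: loewner_ge_scaled_id_iff expected_gram_def[abs_def])
qed

end
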